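(* Let $q$ be a prime power, $V$ a $v$-dimensional vector space over $\mathrm{GF}(q)$, $\mathcal{G}$ a $(g-1)$-spread of $V$, and let $G$ be a subgroup of the stabilizer of $\mathcal{G}$ in $\mathrm{P\Gamma L}(v,q)$ (acting on the subspaces of $V$). Suppose $G$ acts transitively on the set of $2$-dimensional subspaces of $V$ that are not contained in any element of $\mathcal{G}$. Let $k\ge 2$ and let $\mathcal{B}$ be any union of $G$-orbits on the set of $k$-dimensional subspaces of $V$ that are scattered with respect to $\mathcal{G}$. Then there is an integer $\lambda$ such that every $2$-dimensional subspace of $V$ not contained in any element of $\mathcal{G}$ is contained in exactly $\lambda$ elements of $\mathcal{B}$; that is, $(V,\mathcal{G},\mathcal{B})$ is a $(v,g,k,\lambda)_q$-GDD for a suitable value $\lambda$.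
   Context: A $(g-1)$-spread of $V$ is a set of $g$-dimensional subspaces of $V$ such that every $1$-dimensional subspace of $V$ lies in exactly one of them. A subspace $B\le V$ is scattered with respect to $\mathcal{G}$ if $B$ contains no $2$-dimensional subspace contained in an element of $\mathcal{G}$. A $(v,g,k,\lambda)_q$-GDD is a triple $(V,\mathcal{G},\mathcal{B})$ with $V$ a $v$-dimensional $\mathrm{GF}(q)$-space, $\mathcal{G}$ a $(g-1)$-spread of $V$ with $\#\mathcal{G}>1$, $\mathcal{B}$ a set of $k$-dimensional subspaces of $V$, such that every $2$-dimensional subspace of $V$ is either contained in an element of $\mathcal{G}$ and in no element of $\mathcal{B}$, or in no element of $\mathcal{G}$ and in exactly $\lambda$ elements of $\mathcal{B}$. *)

theory Defs
  imports "HOL-Analysis.Analysis"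
begin

text \<open>Ambient space: V = GF(q)^v, modelled as the type 'a ^ 'n with 'a a finite field
  (so q = CARD('a) is a prime power) and v = CARD('n).\<close>

definition sub_dim :: "nat \<Rightarrow> ('a::field ^ 'n) set \<Rightarrow> bool" where
  "sub_dim d U \<longleftrightarrow> vec.subspace U \<and> vec.dim U = d"

definition is_spread :: "nat \<Rightarrow> ('a::field ^ 'n) set set \<Rightarrow> bool" where
  "is_spread g S \<longleftrightarrow> (\<forall>X\<in>S. sub_dim g X) \<and>
     (\<forall>P. sub_dim 1 P \<longrightarrow> (\<exists>!X. X \<in> S \<and> P \<subseteq> X))"

definition scattered :: "('a::field ^ 'n) set set \<Rightarrow> ('a ^ 'n) set \<Rightarrow> bool" where
  "scattered S B \<longleftrightarrow> \<not> (\<exists>L. sub_dim 2 L \<and> L \<subseteq> B \<and> (\<exists>X\<in>S. L \<subseteq> X))"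

definition is_GDD :: "nat \<Rightarrow> nat \<Rightarrow> nat \<Rightarrow> nat \<Rightarrow>
    ('a::field ^ 'n) set set \<Rightarrow> ('a ^ 'n) set set \<Rightarrow> bool" where
  "is_GDD v g k lam S B \<longleftrightarrow> CARD('n) = v \<and> is_spread g S \<and> card S > 1 \<and>
     (\<forall>X\<in>B. sub_dim k X) \<and>
     (\<forall>L. sub_dim 2 L \<longrightarrow>
        ((\<exists>X\<in>S. L \<subseteq> X) \<and> (\<forall>X\<in>B. \<not> L \<subseteq> X)) \<or>
        ((\<forall>X\<in>S. \<not> L \<subseteq> X) \<and> card {X\<in>B. L \<subseteq> X} = lam))"

text \<open>Field automorphisms and semilinear bijections (elements of GammaL(v,q)); a subgroup
  of PGammaL(v,q) acting on subspaces is represented by its preimage in GammaL(v,q),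
  a group of semilinear bijections acting by U \<mapsto> f ` U.\<close>
definition field_aut :: "('a::field \<Rightarrow> 'a) \<Rightarrow> bool" where
  "field_aut \<sigma> \<longleftrightarrow> bij \<sigma> \<and> (\<forall>a b. \<sigma> (a + b) = \<sigma> a + \<sigma> b) \<and> (\<forall>a b. \<sigma> (a * b) = \<sigma> a * \<sigma> b)"

definition semilinear_bij :: "('a::field ^ 'n \<Rightarrow> 'a ^ 'n) \<Rightarrow> bool" where
  "semilinear_bij f \<longleftrightarrow> bij f \<and> (\<exists>\<sigma>. field_aut \<sigma> \<and>
     (\<forall>x y. f (x + y) = f x + f y) \<and> (\<forall>c x. f (c *s x) = \<sigma> c *s f x))"

definition is_GammaL_subgroup :: "('a::field ^ 'n \<Rightarrow> 'a ^ 'n) set \<Rightarrow> bool" where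
  "is_GammaL_subgroup G \<longleftrightarrow> (\<forall>f\<in>G. semilinear_bij f) \<and> id \<in> G \<and>
     (\<forall>f\<in>G. \<forall>h\<in>G. f \<circ> h \<in> G) \<and> (\<forall>f\<in>G. inv f \<in> G)"

end

theory Submission
  imports Defs
begin

text \<open>G maps the blocks through a 2-space L bijectively onto the blocks through its
  image, so their number is constant on each G-orbit of 2-spaces, and the 2-spaces not in
  a spread element form a single orbit.  A 2-space inside a spread element lies in no block
  because the blocks are scattered.\<close>

lemma invariant_const_on_transitive:
  assumes invariant: "\<And>f x. f \<in> G \<Longrightarrow> P x \<Longrightarrow> c (f x) = c x"
    and transitive: "\<And>x y. P x \<Longrightarrow> P y \<Longrightarrow> \<exists>f\<in>G. f x = y"
  shows "\<exists>lam. \<forall>x. P x \<longrightarrow> c x = lam"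
proof (cases "\<exists>x. P x")
  case True
  then obtain x0 where "P x0" by blast
  have "c x = c x0" if "P x" for x
  proof -
    obtain f where "f \<in> G" "f x0 = x" using transitive[OF \<open>P x0\<close> \<open>P x\<close>] by blast
    then show ?thesis using invariant[OF _ \<open>P x0\<close>] by blast
  qed
  then show ?thesis by blast
qed simp

lemma card_superset_image_bij:
  assumes "bij f" and B_closed: "image f ` B = B"
  shows "card {X\<in>B. f ` L \<subseteq> X} = card {X\<in>B. L \<subseteq> X}"
proof -
  have inj: "inj f" using \<open>bij f\<close> bij_is_inj by blast
  then have "inj_on (image f) {X\<in>B. L \<subseteq> X}"
    by (meson inj_image_eq_iff inj_onI)
  moreover have "{X\<in>B. f ` L \<subseteq> X} = {X\<in>image f ` B. f ` L \<subseteq> X}"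
    using B_closed by simp
  moreover have "\<dots> = image f ` {X\<in>B. L \<subseteq> X}"
    using inj_image_subset_iff[OF inj] by blast
  ultimately show ?thesis by (simp add: card_image)
qed

lemma GammaL_subgroup_image_closed:
  assumes "is_GammaL_subgroup G" and "\<forall>f\<in>G. \<forall>X\<in>B. f ` X \<in> B" and "f \<in> G"
  shows "image f ` B = B"
proof
  show "image f ` B \<subseteq> B" using assms(2,3) by blast
  have "bij f" "inv f \<in> G"
    using assms(1,3) unfolding is_GammaL_subgroup_def semilinear_bij_def by blast+
  then have "X = f ` (inv f ` X)" "inv f ` X \<in> B" if "X \<in> B" for X
    using assms(2) that by (auto simp: bij_is_surj image_f_inv_f)
  then show "B \<subseteq> image f ` B" by blast
qed

lemma GammaL_subgroup_card_blocks_through_image: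
  assumes "is_GammaL_subgroup G" and "\<forall>f\<in>G. \<forall>X\<in>B. f ` X \<in> B" and "f \<in> G"
  shows "card {X\<in>B. f ` L \<subseteq> X} = card {X\<in>B. L \<subseteq> X}"
proof (rule card_superset_image_bij)
  show "bij f" using assms(1,3) unfolding is_GammaL_subgroup_def semilinear_bij_def by blast
  show "image f ` B = B" using GammaL_subgroup_image_closed[OF assms] .
qed

lemma is_GDD_if_scattered_const_count:
  fixes S :: "('a::field ^ 'n) set set"
  assumes "is_spread g S" and "card S > 1"
    and B_sub: "\<forall>X\<in>B. sub_dim k X \<and> scattered S X"
    and lam: "\<forall>L. sub_dim 2 L \<and> (\<forall>X\<in>S. \<not> L \<subseteq> X) \<longrightarrow> card {X\<in>B. L \<subseteq> X} = lam"
  shows "is_GDD CARD('n) g k lam S B"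
  unfolding is_GDD_def
proof (intro conjI allI impI)
  fix L :: "('a ^ 'n) set" assume L: "sub_dim 2 L"
  show "((\<exists>X\<in>S. L \<subseteq> X) \<and> (\<forall>X\<in>B. \<not> L \<subseteq> X)) \<or>
      ((\<forall>X\<in>S. \<not> L \<subseteq> X) \<and> card {X\<in>B. L \<subseteq> X} = lam)"
  proof (cases "\<exists>X\<in>S. L \<subseteq> X")
    case True
    with L B_sub show ?thesis unfolding scattered_def by blast
  next
    case False
    with L lam show ?thesis by blast
  qed
next
  show "\<forall>X\<in>B. sub_dim k X" using B_sub by blast
qed (fact refl assms)+

theorem lemma11:
  fixes S :: "('a::{finite,field} ^ 'n) set set"
    and G :: "('a ^ 'n \<Rightarrow> 'a ^ 'n) set"
    and B :: "('a ^ 'n) set set"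
    and g k :: nat
  assumes spread: "is_spread g S"
    and grp: "is_GammaL_subgroup G"
    and stab: "\<forall>f\<in>G. \<forall>X\<in>S. f ` X \<in> S"
    and trans: "\<forall>L1 L2. sub_dim 2 L1 \<and> (\<forall>X\<in>S. \<not> L1 \<subseteq> X) \<and>
                        sub_dim 2 L2 \<and> (\<forall>X\<in>S. \<not> L2 \<subseteq> X) \<longrightarrow> (\<exists>f\<in>G. f ` L1 = L2)"
    and k: "k \<ge> 2"
    and B_sub: "\<forall>X\<in>B. sub_dim k X \<and> scattered S X"
    and B_inv: "\<forall>f\<in>G. \<forall>X\<in>B. f ` X \<in> B"
  shows "\<exists>lam::nat. (\<forall>L. sub_dim 2 L \<and> (\<forall>X\<in>S. \<not> L \<subseteq> X) \<longrightarrow> card {X\<in>B. L \<subseteq> X} = lam) \<and>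
           (card S > 1 \<longrightarrow> is_GDD CARD('n) g k lam S B)"
proof -
  have "\<exists>lam. \<forall>L. sub_dim 2 L \<and> (\<forall>X\<in>S. \<not> L \<subseteq> X) \<longrightarrow> card {X\<in>B. L \<subseteq> X} = lam"
  proof (rule invariant_const_on_transitive[where G = "image ` G"])
    show "card {X\<in>B. h L \<subseteq> X} = card {X\<in>B. L \<subseteq> X}" if "h \<in> image ` G" for h L
      using that GammaL_subgroup_card_blocks_through_image[OF grp B_inv] by blast
    show "\<exists>h\<in>image ` G. h L1 = L2"
      if L1: "sub_dim 2 L1 \<and> (\<forall>X\<in>S. \<not> L1 \<subseteq> X)"
        and L2: "sub_dim 2 L2 \<and> (\<forall>X\<in>S. \<not> L2 \<subseteq> X)" for L1 L2
    proof -
      obtain f where "f \<in> G" "f ` L1 = L2" using trans L1 L2 by meson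
      then show ?thesis by blast
    qed
  qed
  then obtain lam where lam: "\<forall>L. sub_dim 2 L \<and> (\<forall>X\<in>S. \<not> L \<subseteq> X) \<longrightarrow> card {X\<in>B. L \<subseteq> X} = lam"
    by blast
  with is_GDD_if_scattered_const_count[OF spread _ B_sub] show ?thesis by blast
qed

end
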